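(* Let $k_1,k_2,b_1,b_2,b_3$ be non-zero constants with $b_1\neq b_2$, and let $$f(x,y)=k_1e^{\sqrt2[b_1x+(b_2-b_1)y]}+k_2e^{\frac{1}{\sqrt2}(b_1x+b_3y)}.$$ Consider the constrained system $\ddot x+\frac{f_{,x}}{f}\dot x^2=0$, $\ddot y+\frac{f_{,y}}{f}\dot y^2=0$, $f(x,y)\dot x\dot y=E_0\neq0$ (the non-null geodesics of the metric $\gamma_{12}=\gamma_{21}=f$, $\gamma_{11}=\gamma_{22}=0$). Then $$I_1=f(x,y)^2e^{-\sqrt2b_1x}\dot y^2+\frac{k_1b_1E_0}{b_1-b_2}e^{\sqrt2(b_2-b_1)y}$$ is a first integral of this constrained system.
   Context: A first integral of the constrained system is a function whose time derivative vanishes along every solution of the three displayed equations; the metric is considered where $f\neq0$. *)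

theory Defs
  imports "HOL-Analysis.Analysis"
begin

definition fmet :: "real \<Rightarrow> real \<Rightarrow> real \<Rightarrow> real \<Rightarrow> real \<Rightarrow> real \<Rightarrow> real \<Rightarrow> real" where
  "fmet k1 k2 b1 b2 b3 x y =
     k1 * exp (sqrt 2 * (b1 * x + (b2 - b1) * y)) + k2 * exp ((1 / sqrt 2) * (b1 * x + b3 * y))"

definition I1 :: "real \<Rightarrow> real \<Rightarrow> real \<Rightarrow> real \<Rightarrow> real \<Rightarrow> real \<Rightarrow> real \<Rightarrow> real \<Rightarrow> real \<Rightarrow> real" where
  "I1 k1 k2 b1 b2 b3 E0 x y ydot =
     (fmet k1 k2 b1 b2 b3 x y)\<^sup>2 * exp (- sqrt 2 * b1 * x) * ydot\<^sup>2
     + (k1 * b1 * E0 / (b1 - b2)) * exp (sqrt 2 * (b2 - b1) * y)"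

end

theory Submission
  imports Defs
begin

text \<open>For the metric \<open>2 f dx dy\<close> the y-geodesic equation says exactly that the momentum
  \<open>p = f y'\<close> satisfies \<open>p' = f\<^sub>x x' y'\<close>. Hence the derivative of \<open>p\<^sup>2 exp (-\<surd>2 b\<^sub>1 x)\<close> is
  \<open>p x' y' exp (-\<surd>2 b\<^sub>1 x) (2 f\<^sub>x - \<surd>2 b\<^sub>1 f)\<close>. By the constraint \<open>p x' = E\<^sub>0\<close>, and since in
  \<open>2 f\<^sub>x - \<surd>2 b\<^sub>1 f\<close> the \<open>k\<^sub>2\<close>-exponential cancels, this equals
  \<open>\<surd>2 b\<^sub>1 k\<^sub>1 E\<^sub>0 y' exp (\<surd>2 (b\<^sub>2 - b\<^sub>1) y)\<close>, the negative of the derivative of the second term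
  of \<open>I\<^sub>1\<close>.\<close>

lemma geodesic_momentum_has_derivative:
  fixes g v :: "real \<Rightarrow> real"
  assumes "(g has_real_derivative gx * u + gy * v t) (at t)"
    and "(v has_real_derivative w) (at t)"
    and "w + gy / g t * (v t)\<^sup>2 = 0" and "g t \<noteq> 0"
  shows "((\<lambda>s. g s * v s) has_real_derivative gx * u * v t) (at t)"
proof -
  have "g t * w = - gy * (v t)\<^sup>2"
    using assms(3,4) by (simp add: field_simps)
  then have "(gx * u + gy * v t) * v t + g t * w = gx * u * v t"
    by (simp add: algebra_simps power2_eq_square)
  then show ?thesis
    using DERIV_mult[OF assms(1,2)] by (simp add: mult.commute)
qed

definition fmet_dx :: "real \<Rightarrow> real \<Rightarrow> real \<Rightarrow> real \<Rightarrow> real \<Rightarrow> real \<Rightarrow> real \<Rightarrow> real" where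
  "fmet_dx k1 k2 b1 b2 b3 x y =
     sqrt 2 * b1 * k1 * exp (sqrt 2 * (b1 * x + (b2 - b1) * y))
     + b1 / sqrt 2 * k2 * exp ((1 / sqrt 2) * (b1 * x + b3 * y))"

definition fmet_dy :: "real \<Rightarrow> real \<Rightarrow> real \<Rightarrow> real \<Rightarrow> real \<Rightarrow> real \<Rightarrow> real \<Rightarrow> real" where
  "fmet_dy k1 k2 b1 b2 b3 x y =
     sqrt 2 * (b2 - b1) * k1 * exp (sqrt 2 * (b1 * x + (b2 - b1) * y))
     + b3 / sqrt 2 * k2 * exp ((1 / sqrt 2) * (b1 * x + b3 * y))"

lemma fmet_has_derivative_along:
  assumes "(x has_real_derivative x') (at t)" and "(y has_real_derivative y') (at t)"
  shows "((\<lambda>s. fmet k1 k2 b1 b2 b3 (x s) (y s)) has_real_derivative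
           fmet_dx k1 k2 b1 b2 b3 (x t) (y t) * x' + fmet_dy k1 k2 b1 b2 b3 (x t) (y t) * y') (at t)"
  unfolding fmet_def fmet_dx_def fmet_dy_def
  by (rule derivative_eq_intros refl assms)+ (simp add: algebra_simps)

lemma deriv_fmet_y: "deriv (\<lambda>v. fmet k1 k2 b1 b2 b3 x v) y = fmet_dy k1 k2 b1 b2 b3 x y"
  using fmet_has_derivative_along[of "\<lambda>_. x" 0 y "\<lambda>v. v" 1]
  by (intro DERIV_imp_deriv) (simp add: DERIV_ident)

lemma fmet_dx_defect:
  "2 * fmet_dx k1 k2 b1 b2 b3 x y - sqrt 2 * b1 * fmet k1 k2 b1 b2 b3 x y
     = sqrt 2 * b1 * k1 * exp (sqrt 2 * (b1 * x + (b2 - b1) * y))"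
proof -
  have "2 * (b1 / sqrt 2 * z) = sqrt 2 * b1 * z" for z :: real
    by (simp add: field_simps)
  then show ?thesis
    unfolding fmet_dx_def fmet_def by (simp add: distrib_left right_diff_distrib mult.assoc)
qed

theorem mainTheorem10:
  fixes k1 k2 b1 b2 b3 E0 :: real
    and x y x' y' x'' y'' :: "real \<Rightarrow> real"
    and T :: "real set"
  assumes "k1 \<noteq> 0" "k2 \<noteq> 0" "b1 \<noteq> 0" "b2 \<noteq> 0" "b3 \<noteq> 0" "b1 \<noteq> b2" "E0 \<noteq> 0"
    and "open T"
    and dx: "\<And>t. t \<in> T \<Longrightarrow> (x has_real_derivative x' t) (at t)"
    and dy: "\<And>t. t \<in> T \<Longrightarrow> (y has_real_derivative y' t) (at t)"
    and ddx: "\<And>t. t \<in> T \<Longrightarrow> (x' has_real_derivative x'' t) (at t)"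
    and ddy: "\<And>t. t \<in> T \<Longrightarrow> (y' has_real_derivative y'' t) (at t)"
    and fnz: "\<And>t. t \<in> T \<Longrightarrow> fmet k1 k2 b1 b2 b3 (x t) (y t) \<noteq> 0"
    and eqx: "\<And>t. t \<in> T \<Longrightarrow>
       x'' t + deriv (\<lambda>u. fmet k1 k2 b1 b2 b3 u (y t)) (x t) / fmet k1 k2 b1 b2 b3 (x t) (y t) * (x' t)\<^sup>2 = 0"
    and eqy: "\<And>t. t \<in> T \<Longrightarrow>
       y'' t + deriv (\<lambda>v. fmet k1 k2 b1 b2 b3 (x t) v) (y t) / fmet k1 k2 b1 b2 b3 (x t) (y t) * (y' t)\<^sup>2 = 0"
    and con: "\<And>t. t \<in> T \<Longrightarrow> fmet k1 k2 b1 b2 b3 (x t) (y t) * x' t * y' t = E0"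
  shows "\<forall>t\<in>T. ((\<lambda>s. I1 k1 k2 b1 b2 b3 E0 (x s) (y s) (y' s)) has_real_derivative 0) (at t)"
proof
  fix t assume t: "t \<in> T"
  define f where "f s = fmet k1 k2 b1 b2 b3 (x s) (y s)" for s
  define fx where "fx = fmet_dx k1 k2 b1 b2 b3 (x t) (y t)"
  define c where "c = k1 * b1 * E0 / (b1 - b2)"
  have momentum: "((\<lambda>s. f s * y' s) has_real_derivative fx * x' t * y' t) (at t)"
    using geodesic_momentum_has_derivative[OF _ ddy[OF t]] eqy[OF t] fnz[OF t]
      fmet_has_derivative_along[OF dx[OF t] dy[OF t]]
    unfolding f_def fx_def deriv_fmet_y by blast
  have I1_eq: "I1 k1 k2 b1 b2 b3 E0 (x s) (y s) (y' s)
      = (f s * y' s)\<^sup>2 * exp (- sqrt 2 * b1 * x s) + c * exp (sqrt 2 * (b2 - b1) * y s)" for s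
    unfolding I1_def f_def c_def by (simp add: power_mult_distrib)
  have "((\<lambda>s. (f s * y' s)\<^sup>2 * exp (- sqrt 2 * b1 * x s) + c * exp (sqrt 2 * (b2 - b1) * y s))
      has_real_derivative
        E0 * y' t * exp (- sqrt 2 * b1 * x t) * (2 * fx - sqrt 2 * b1 * f t)
        + c * exp (sqrt 2 * (b2 - b1) * y t) * (sqrt 2 * (b2 - b1) * y' t)) (at t)"
    using con[OF t, folded f_def]
    by (rule_tac derivative_eq_intros refl momentum dx[OF t] dy[OF t])+
       (auto simp: algebra_simps power2_eq_square)
  moreover have "E0 * y' t * exp (- sqrt 2 * b1 * x t) * (2 * fx - sqrt 2 * b1 * f t)
      + c * exp (sqrt 2 * (b2 - b1) * y t) * (sqrt 2 * (b2 - b1) * y' t) = 0"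
    unfolding fx_def f_def fmet_dx_defect c_def using \<open>b1 \<noteq> b2\<close>
    by (simp add: field_simps mult_exp_exp)
  ultimately show "((\<lambda>s. I1 k1 k2 b1 b2 b3 E0 (x s) (y s) (y' s)) has_real_derivative 0) (at t)"
    unfolding I1_eq by simp
qed

end
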